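(* Let $n,r\geq 1$ and $0\le k\le n$. Then \[ \mathcal{S}_{r}\Lambda^k(\mathbb{R}^n)\subset \mathcal{S}_{r+1}^-\Lambda^k(\mathbb{R}^n)\subset \mathcal{S}_{r+1}\Lambda^k(\mathbb{R}^n). \]
   Context: Fix $n\ge1$. For a multi-index $\alpha\in\mathbb{N}^n$ (nonnegative integers) and a subset $\sigma=\{\sigma(1)<\dots<\sigma(k)\}\subset\{1,\dots,n\}$, the form monomial is $x^\alpha dx_\sigma:=x_1^{\alpha_1}\cdots x_n^{\alpha_n}\,dx_{\sigma(1)}\wedge\cdots\wedge dx_{\sigma(k)}$, of degree $|\alpha|=\sum_i\alpha_i$. $\mathcal{H}_r\Lambda^k(\mathbb{R}^n)$ is the span of form monomials with $|\alpha|=r$, $|\sigma|=k$ (it is $0$ if $r<0$ or $k\notin\{0,\dots,n\}$), and $\mathcal{P}_r\Lambda^k:=\bigoplus_{j=0}^r\mathcal{H}_j\Lambda^k$ ($=0$ if $r<0$). $d$ is the exterior derivative. The Koszul operator $\kappa$ is defined on monomials by $\kappa(x^\alpha dx_\sigma)=\sum_{i=1}^k(-1)^{i+1}x^\alpha x_{\sigma(i)}\,dx_{\sigma(1)}\wedge\cdots\wedge\widehat{dx_{\sigma(i)}}\wedge\cdots\wedge dx_{\sigma(k)}$ (hat = omitted) and extended linearly. The linear degree of a form monomial is $\mathrm{ldeg}(x^\alpha dx_\sigma):=\#\{i\notin\sigma:\alpha_i=1\}$, and $\mathcal{H}_{r,l}\Lambda^k(\mathbb{R}^n)$ is the span of the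 form monomials in $\mathcal{H}_r\Lambda^k$ with linear degree $\ge l$. Define $\mathcal{J}_r\Lambda^k(\mathbb{R}^n):=\sum_{l\ge1}\kappa\,\mathcal{H}_{r+l-1,l}\Lambda^{k+1}(\mathbb{R}^n)$. The serendipity space is $\mathcal{S}_r\Lambda^k(\mathbb{R}^n):=\mathcal{P}_r\Lambda^k+\mathcal{J}_r\Lambda^k+d\,\mathcal{J}_{r+1}\Lambda^{k-1}$ (this sum is direct; forms of degree $-1$ or $n+1$ are $0$). For $r\ge1$ the trimmed serendipity space is $\mathcal{S}_r^-\Lambda^k(\mathbb{R}^n):=\mathcal{S}_{r-1}\Lambda^k(\mathbb{R}^n)+\kappa\,\mathcal{S}_{r-1}\Lambda^{k+1}(\mathbb{R}^n)$. *)

theory Defs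
  imports Complex_Main
begin

(* A form monomial x^alpha dx_sigma is encoded by the pair (alpha, sigma), where
   alpha :: nat => nat is the multi-index (indices 1..n) and sigma :: nat set is the
   (increasingly ordered) set of differential indices.  A polynomial differential form
   is a real coefficient function on monomials (all forms considered have finite support). *)

type_synonym mono = "(nat \<Rightarrow> nat) \<times> nat set"
type_synonym form = "mono \<Rightarrow> real"

definition valid_mono :: "nat \<Rightarrow> mono \<Rightarrow> bool" where
  "valid_mono n m \<longleftrightarrow> (\<forall>i. i \<notin> {1..n} \<longrightarrow> fst m i = 0) \<and> snd m \<subseteq> {1..n}"

definition mdeg :: "nat \<Rightarrow> (nat \<Rightarrow> nat) \<Rightarrow> nat" where
  "mdeg n \<alpha> = (\<Sum>i\<in>{1..n}. \<alpha> i)"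

definition ldeg :: "nat \<Rightarrow> mono \<Rightarrow> nat" where
  "ldeg n m = card {i\<in>{1..n}. i \<notin> snd m \<and> fst m i = 1}"

definition mono_form :: "mono \<Rightarrow> form" where
  "mono_form m = (\<lambda>p. if p = m then 1 else 0)"

definition zero_form :: form where
  "zero_form = (\<lambda>p. 0)"

definition lspan :: "form set \<Rightarrow> form set" where
  "lspan A = {f. \<exists>F c. finite F \<and> F \<subseteq> A \<and> f = (\<lambda>p. \<Sum>g\<in>F. c g * g p)}"

definition supp :: "form \<Rightarrow> mono set" where
  "supp f = {p. f p \<noteq> 0}"

(* Koszul operator on a monomial: sum over i of (-1)^(i+1) x^alpha x_{sigma(i)} dx_{sigma - sigma(i)};
   the position i of s in sigma satisfies i - 1 = card {j in sigma. j < s}. *)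
definition kappa_mono :: "mono \<Rightarrow> form" where
  "kappa_mono m = (\<lambda>p. \<Sum>s\<in>snd m. (-1) ^ card {j\<in>snd m. j < s} *
      (if p = ((fst m)(s := fst m s + 1), snd m - {s}) then 1 else 0))"

definition kappa :: "form \<Rightarrow> form" where
  "kappa f = (\<lambda>p. \<Sum>q\<in>supp f. f q * kappa_mono q p)"

(* exterior derivative on a monomial: sum over i not in sigma of
   alpha_i x^(alpha - e_i) dx_i /\ dx_sigma, and dx_i /\ dx_sigma = (-1)^card{j in sigma. j<i} dx_(sigma + i) *)
definition d_mono :: "nat \<Rightarrow> mono \<Rightarrow> form" where
  "d_mono n m = (\<lambda>p. \<Sum>i\<in>{1..n} - snd m. real (fst m i) * (-1) ^ card {j\<in>snd m. j < i} *
      (if p = ((fst m)(i := fst m i - 1), insert i (snd m)) then 1 else 0))"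

definition dform :: "nat \<Rightarrow> form \<Rightarrow> form" where
  "dform n f = (\<lambda>p. \<Sum>q\<in>supp f. f q * d_mono n q p)"

definition Hrl :: "nat \<Rightarrow> nat \<Rightarrow> nat \<Rightarrow> nat \<Rightarrow> form set" where
  "Hrl n r l k = lspan {mono_form m | m. valid_mono n m \<and> mdeg n (fst m) = r
       \<and> card (snd m) = k \<and> ldeg n m \<ge> l}"

definition Hsp :: "nat \<Rightarrow> nat \<Rightarrow> nat \<Rightarrow> form set" where
  "Hsp n r k = Hrl n r 0 k"

definition Psp :: "nat \<Rightarrow> nat \<Rightarrow> nat \<Rightarrow> form set" where
  "Psp n r k = lspan (\<Union>j\<in>{0..r}. Hsp n j k)"

definition Jsp :: "nat \<Rightarrow> nat \<Rightarrow> nat \<Rightarrow> form set" where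
  "Jsp n r k = lspan (\<Union>l\<in>{1..}. kappa ` Hrl n (r + l - 1) l (k + 1))"

(* S_r Lambda^k = P_r Lambda^k + J_r Lambda^k + d J_{r+1} Lambda^(k-1), with Lambda^(-1) = 0 *)
definition Ssp :: "nat \<Rightarrow> nat \<Rightarrow> nat \<Rightarrow> form set" where
  "Ssp n r k = lspan (Psp n r k \<union> Jsp n r k \<union>
      (if k = 0 then {zero_form} else dform n ` Jsp n (r + 1) (k - 1)))"

(* trimmed serendipity, for r >= 1: S_r^- Lambda^k = S_(r-1) Lambda^k + kappa S_(r-1) Lambda^(k+1) *)
definition Sminus :: "nat \<Rightarrow> nat \<Rightarrow> nat \<Rightarrow> form set" where
  "Sminus n r k = lspan (Ssp n (r - 1) k \<union> kappa ` Ssp n (r - 1) (k + 1))"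

end

theory Submission
  imports Defs
begin

text \<open>
  The first inclusion is immediate from the definition of \<open>S\<^sup>-\<^sub>r\<^sub>+\<^sub>1\<close>.
  For the second, \<open>S\<^sub>r \<subseteq> S\<^sub>r\<^sub>+\<^sub>1\<close>: the summand \<open>l = 1\<close> of \<open>J\<^sub>r\<close> is
  \<open>\<kappa>H\<^sub>r \<subseteq> H\<^sub>r\<^sub>+\<^sub>1\<close>, the summand \<open>l\<close> is the summand \<open>l - 1\<close> of \<open>J\<^sub>r\<^sub>+\<^sub>1\<close>, and
  \<open>d\<close> lowers the polynomial degree.  It remains to see \<open>\<kappa>S\<^sub>r \<subseteq> S\<^sub>r\<^sub>+\<^sub>1\<close>.  We have
  \<open>\<kappa>\<kappa> = 0\<close>, so \<open>\<kappa>J\<^sub>r = 0\<close>, and \<open>\<kappa>P\<^sub>r \<subseteq> P\<^sub>r\<^sub>+\<^sub>1\<close>.  Finally the homotopy formula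
  \<open>d\<kappa> + \<kappa>d = (p + k) id\<close> on homogeneous \<open>k\<close>-forms of degree \<open>p\<close>, applied to \<open>\<kappa>\<eta>\<close>,
  gives \<open>\<kappa>d\<kappa>\<eta> = (p + k + 1) \<kappa>\<eta>\<close>, hence \<open>\<kappa>dJ\<^sub>r\<^sub>+\<^sub>1 \<subseteq> J\<^sub>r\<^sub>+\<^sub>1\<close>.
\<close>

section \<open>Finitely supported forms and linear extensions\<close>

text \<open>\<open>kappa\<close> and \<open>dform\<close> sum over \<open>supp f\<close>, so they behave linearly only on
  finitely supported forms.\<close>

definition fin_forms :: "form set" where
  "fin_forms = {f. finite (supp f)}"

definition mono_ext :: "(mono \<Rightarrow> form) \<Rightarrow> form \<Rightarrow> form" where
  "mono_ext T f = (\<lambda>p. \<Sum>q\<in>supp f. f q * T q p)"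

definition form_subspace :: "form set \<Rightarrow> bool" where
  "form_subspace V \<longleftrightarrow> zero_form \<in> V \<and> (\<forall>f\<in>V. \<forall>g\<in>V. (\<lambda>p. f p + g p) \<in> V)
     \<and> (\<forall>c. \<forall>f\<in>V. (\<lambda>p. c * f p) \<in> V)"

lemma kappa_eq_mono_ext: "kappa = mono_ext kappa_mono"
  by (rule ext) (simp add: kappa_def mono_ext_def)

lemma dform_eq_mono_ext: "dform n = mono_ext (d_mono n)"
  by (rule ext) (simp add: dform_def mono_ext_def)

lemma supp_mono_form [simp]: "supp (mono_form m) = {m}"
  by (auto simp: supp_def mono_form_def)

lemma supp_sum_subset: "supp (\<lambda>p. \<Sum>q\<in>S. c q * G q p) \<subseteq> (\<Union>q\<in>S. supp (G q))"
  by (auto simp: supp_def intro: ccontr)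

lemma mono_ext_eq_sum:
  "finite S \<Longrightarrow> supp f \<subseteq> S \<Longrightarrow> mono_ext T f p = (\<Sum>q\<in>S. f q * T q p)"
  unfolding mono_ext_def by (rule sum.mono_neutral_left) (auto simp: supp_def)

lemma mono_ext_sum:
  assumes "finite S" "\<forall>q\<in>S. G q \<in> fin_forms"
  shows "mono_ext T (\<lambda>p. \<Sum>q\<in>S. c q * G q p) = (\<lambda>p. \<Sum>q\<in>S. c q * mono_ext T (G q) p)"
proof (rule ext)
  fix p
  let ?U = "\<Union>q\<in>S. supp (G q)"
  have U: "finite ?U" using assms by (auto simp: fin_forms_def)
  have "mono_ext T (\<lambda>p. \<Sum>q\<in>S. c q * G q p) p = (\<Sum>y\<in>?U. (\<Sum>q\<in>S. c q * G q y) * T y p)"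
    by (rule mono_ext_eq_sum[OF U supp_sum_subset])
  also have "\<dots> = (\<Sum>q\<in>S. c q * (\<Sum>y\<in>?U. G q y * T y p))"
    by (simp add: sum_distrib_right sum_distrib_left mult.assoc sum.swap[of _ ?U])
  also have "\<dots> = (\<Sum>q\<in>S. c q * mono_ext T (G q) p)"
  proof (rule sum.cong[OF refl])
    fix q assume "q \<in> S"
    hence "supp (G q) \<subseteq> ?U" by auto
    thus "c q * (\<Sum>y\<in>?U. G q y * T y p) = c q * mono_ext T (G q) p"
      using mono_ext_eq_sum[OF U] by simp
  qed
  finally show "mono_ext T (\<lambda>p. \<Sum>q\<in>S. c q * G q p) p = (\<Sum>q\<in>S. c q * mono_ext T (G q) p)" .
qed

lemma mono_ext_mono_form [simp]: "mono_ext T (mono_form m) = T m"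
  by (rule ext) (simp add: mono_ext_def, simp add: mono_form_def)

lemma mono_form_fin [simp]: "mono_form m \<in> fin_forms"
  by (simp add: fin_forms_def)

lemma mono_ext_mono_form_sum:
  "finite S \<Longrightarrow> mono_ext T (\<lambda>p. \<Sum>q\<in>S. c q * mono_form (w q) p) x = (\<Sum>q\<in>S. c q * T (w q) x)"
  by (simp add: mono_ext_sum)

lemma mono_ext_supp_subset:
  "supp f \<subseteq> P \<Longrightarrow> (\<And>q. q \<in> P \<Longrightarrow> supp (T q) \<subseteq> M) \<Longrightarrow> supp (mono_ext T f) \<subseteq> M"
  unfolding mono_ext_def using supp_sum_subset[where S="supp f" and c=f and G=T] by blast

lemma mono_ext_fin: "(\<And>q. T q \<in> fin_forms) \<Longrightarrow> f \<in> fin_forms \<Longrightarrow> mono_ext T f \<in> fin_forms"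
  unfolding mono_ext_def fin_forms_def mem_Collect_eq
  by (rule finite_subset[OF supp_sum_subset]) auto

lemma fin_form_expansion: "f \<in> fin_forms \<Longrightarrow> f = (\<lambda>p. \<Sum>q\<in>supp f. f q * mono_form q p)"
  by (rule ext) (simp add: fin_forms_def mono_form_def supp_def if_distrib cong: if_cong)

lemma form_subspace_sum:
  assumes V: "form_subspace V" and "finite S" "\<forall>q\<in>S. G q \<in> V"
  shows "(\<lambda>p. \<Sum>q\<in>S. c q * G q p) \<in> V"
  using assms(2,3)
proof (induction S rule: finite_induct)
  case empty
  then show ?case using V by (simp add: form_subspace_def zero_form_def)
next
  case (insert x F)
  have "(\<lambda>p. c x * G x p) \<in> V" using V insert.prems by (simp add: form_subspace_def)
  moreover have "(\<lambda>p. \<Sum>q\<in>F. c q * G q p) \<in> V" using insert by auto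
  ultimately have "(\<lambda>p. c x * G x p + (\<Sum>q\<in>F. c q * G q p)) \<in> V"
    using V unfolding form_subspace_def by fast
  thus ?case using insert by simp
qed

lemma lspan_least: "form_subspace V \<Longrightarrow> A \<subseteq> V \<Longrightarrow> lspan A \<subseteq> V"
  unfolding lspan_def using form_subspace_sum[of V _ "\<lambda>g. g"] by blast

lemma lspan_superset: "A \<subseteq> lspan A"
proof
  fix f assume "f \<in> A"
  thus "f \<in> lspan A" unfolding lspan_def mem_Collect_eq
    by (intro exI[of _ "{f}"] exI[of _ "\<lambda>_. 1"]) auto
qed

lemma lspan_mono: "A \<subseteq> B \<Longrightarrow> lspan A \<subseteq> lspan B"
  unfolding lspan_def by blast

lemma form_subspace_lspan: "form_subspace (lspan A)"
  unfolding form_subspace_def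
proof (intro conjI ballI allI)
  show "zero_form \<in> lspan A" unfolding lspan_def zero_form_def mem_Collect_eq
    by (intro exI[of _ "{}"]) auto
next
  fix f g assume "f \<in> lspan A" "g \<in> lspan A"
  then obtain F1 c1 F2 c2 where h: "finite F1" "F1 \<subseteq> A" "f = (\<lambda>p. \<Sum>g\<in>F1. c1 g * g p)"
    "finite F2" "F2 \<subseteq> A" "g = (\<lambda>p. \<Sum>g\<in>F2. c2 g * g p)" unfolding lspan_def by blast
  let ?c = "\<lambda>h. (if h \<in> F1 then c1 h else 0) + (if h \<in> F2 then c2 h else 0)"
  have "(\<Sum>h\<in>F1 \<union> F2. ?c h * h p) = f p + g p" for p
  proof -
    have "(\<Sum>h\<in>F1 \<union> F2. (if h \<in> F1 then c1 h * h p else 0)) = (\<Sum>h\<in>F1. c1 h * h p)"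
      "(\<Sum>h\<in>F1 \<union> F2. (if h \<in> F2 then c2 h * h p else 0)) = (\<Sum>h\<in>F2. c2 h * h p)"
      using h by (intro sum.mono_neutral_cong_right; auto)+
    moreover have "(\<Sum>h\<in>F1 \<union> F2. ?c h * h p) = (\<Sum>h\<in>F1 \<union> F2.
        (if h \<in> F1 then c1 h * h p else 0) + (if h \<in> F2 then c2 h * h p else 0))"
      by (rule sum.cong) (auto simp: distrib_right)
    ultimately show ?thesis using h by (simp add: sum.distrib)
  qed
  thus "(\<lambda>p. f p + g p) \<in> lspan A" unfolding lspan_def mem_Collect_eq using h
    by (intro exI[of _ "F1 \<union> F2"] exI[of _ "?c"]) auto
next
  fix c f assume "f \<in> lspan A"
  then obtain F1 c1 where h: "finite F1" "F1 \<subseteq> A" "f = (\<lambda>p. \<Sum>g\<in>F1. c1 g * g p)"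
    unfolding lspan_def by blast
  thus "(\<lambda>p. c * f p) \<in> lspan A" unfolding lspan_def mem_Collect_eq
    by (intro exI[of _ "F1"] exI[of _ "\<lambda>g. c * c1 g"]) (auto simp: sum_distrib_left mult.assoc)
qed

lemma form_subspace_fin_supp: "form_subspace {f\<in>fin_forms. supp f \<subseteq> P}"
  unfolding form_subspace_def
proof (intro conjI ballI allI)
  show "zero_form \<in> {f\<in>fin_forms. supp f \<subseteq> P}"
    by (simp add: fin_forms_def supp_def zero_form_def)
next
  fix f g assume "f \<in> {f\<in>fin_forms. supp f \<subseteq> P}" "g \<in> {f\<in>fin_forms. supp f \<subseteq> P}"
  moreover have "supp (\<lambda>p. f p + g p) \<subseteq> supp f \<union> supp g" by (auto simp: supp_def)
  ultimately show "(\<lambda>p. f p + g p) \<in> {f\<in>fin_forms. supp f \<subseteq> P}"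
    by (auto simp: fin_forms_def intro: finite_subset)
next
  fix c f assume "f \<in> {f\<in>fin_forms. supp f \<subseteq> P}"
  moreover have "supp (\<lambda>p. c * f p) \<subseteq> supp f" by (auto simp: supp_def)
  ultimately show "(\<lambda>p. c * f p) \<in> {f\<in>fin_forms. supp f \<subseteq> P}"
    by (auto simp: fin_forms_def intro: finite_subset)
qed

lemma form_subspace_fin_forms: "form_subspace fin_forms"
  using form_subspace_fin_supp[of UNIV] by simp

lemma lspan_mono_forms: "lspan {mono_form m | m. P m} = {f\<in>fin_forms. supp f \<subseteq> {m. P m}}"
proof
  show "lspan {mono_form m | m. P m} \<subseteq> {f\<in>fin_forms. supp f \<subseteq> {m. P m}}"
    by (rule lspan_least[OF form_subspace_fin_supp]) auto
next
  show "{f\<in>fin_forms. supp f \<subseteq> {m. P m}} \<subseteq> lspan {mono_form m | m. P m}"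
  proof
    fix f assume f: "f \<in> {f\<in>fin_forms. supp f \<subseteq> {m. P m}}"
    have "\<forall>q\<in>supp f. mono_form q \<in> lspan {mono_form m | m. P m}"
      using f lspan_superset[of "{mono_form m | m. P m}"] by blast
    hence "(\<lambda>p. \<Sum>q\<in>supp f. f q * mono_form q p) \<in> lspan {mono_form m | m. P m}"
      using f by (intro form_subspace_sum[OF form_subspace_lspan]) (auto simp: fin_forms_def)
    thus "f \<in> lspan {mono_form m | m. P m}" using fin_form_expansion f by auto
  qed
qed

definition fin_linear :: "(form \<Rightarrow> form) \<Rightarrow> bool" where
  "fin_linear T \<longleftrightarrow> (\<forall>f\<in>fin_forms. T f \<in> fin_forms) \<and>
     (\<forall>(S :: form set) c G. finite S \<longrightarrow> G ` S \<subseteq> fin_forms \<longrightarrow>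
        T (\<lambda>p. \<Sum>q\<in>S. c q * G q p) = (\<lambda>p. \<Sum>q\<in>S. c q * T (G q) p))"

lemma fin_linear_mono_ext: "(\<And>q. T q \<in> fin_forms) \<Longrightarrow> fin_linear (mono_ext T)"
  unfolding fin_linear_def by (auto intro: mono_ext_fin mono_ext_sum simp: image_subset_iff)

lemma fin_linear_comp: "fin_linear T \<Longrightarrow> fin_linear U \<Longrightarrow> fin_linear (\<lambda>f. T (U f))"
  unfolding fin_linear_def by (simp add: image_subset_iff)

lemma fin_linear_image_lspan:
  assumes T: "fin_linear T" and "A \<subseteq> fin_forms" "form_subspace V" "T ` A \<subseteq> V"
  shows "T ` lspan A \<subseteq> V"
proof
  fix y assume "y \<in> T ` lspan A"
  then obtain F c where F: "finite F" "F \<subseteq> A" "y = T (\<lambda>p. \<Sum>g\<in>F. c g * g p)"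
    unfolding lspan_def by blast
  hence "y = (\<lambda>p. \<Sum>g\<in>F. c g * T g p)"
    using T assms(2) unfolding fin_linear_def by auto
  thus "y \<in> V" using form_subspace_sum[OF assms(3) F(1), of T c] F assms(4) by auto
qed

lemma mono_ext_mono_ext:
  assumes "f \<in> fin_forms" "\<And>q. U q \<in> fin_forms"
  shows "mono_ext T (mono_ext U f) = mono_ext (\<lambda>q. mono_ext T (U q)) f"
proof -
  have "mono_ext T (\<lambda>p. \<Sum>q\<in>supp f. f q * U q p) = (\<lambda>p. \<Sum>q\<in>supp f. f q * mono_ext T (U q) p)"
    using assms by (intro mono_ext_sum) (auto simp: fin_forms_def)
  thus ?thesis by (simp add: mono_ext_def)
qed

section \<open>The Koszul operator and the exterior derivative on monomials\<close>

definition wedge_sign :: "nat set \<Rightarrow> nat \<Rightarrow> real" where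
  "wedge_sign S i = (-1) ^ card {j\<in>S. j < i}"

lemma kappa_mono_apply:
  "kappa_mono (a, S) p = (\<Sum>s\<in>S. wedge_sign S s * mono_form (a(s := a s + 1), S - {s}) p)"
  by (simp add: kappa_mono_def wedge_sign_def mono_form_def)

lemma d_mono_apply:
  "d_mono n (a, S) p = (\<Sum>i\<in>{1..n} - S. real (a i) * wedge_sign S i * mono_form (a(i := a i - 1), insert i S) p)"
  by (simp add: d_mono_def wedge_sign_def mono_form_def)

lemma kappa_mono_fin: "kappa_mono m \<in> fin_forms"
proof (cases m)
  case (Pair a S)
  show ?thesis
  proof (cases "finite S")
    case True
    thus ?thesis unfolding Pair kappa_mono_apply[abs_def]
      by (intro form_subspace_sum[OF form_subspace_fin_forms]) auto
  next
    case False
    thus ?thesis by (simp add: Pair kappa_mono_def fin_forms_def supp_def)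
  qed
qed

lemma d_mono_fin: "d_mono n m \<in> fin_forms"
proof (cases m)
  case (Pair a S)
  thus ?thesis unfolding Pair d_mono_apply[abs_def]
    by (intro form_subspace_sum[OF form_subspace_fin_forms]) auto
qed

lemma kappa_fin: "f \<in> fin_forms \<Longrightarrow> kappa f \<in> fin_forms"
  unfolding kappa_eq_mono_ext by (intro mono_ext_fin kappa_mono_fin)

lemma dform_fin: "f \<in> fin_forms \<Longrightarrow> dform n f \<in> fin_forms"
  unfolding dform_eq_mono_ext by (intro mono_ext_fin d_mono_fin)

lemma fin_linear_kappa: "fin_linear kappa"
  unfolding kappa_eq_mono_ext by (intro fin_linear_mono_ext kappa_mono_fin)

lemma fin_linear_dform: "fin_linear (dform n)"
  unfolding dform_eq_mono_ext by (intro fin_linear_mono_ext d_mono_fin)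

lemma mono_ext_kappa_mono:
  assumes "finite S"
  shows "mono_ext T (kappa_mono (a, S)) x = (\<Sum>s\<in>S. wedge_sign S s * T (a(s := a s + 1), S - {s}) x)"
proof -
  have "kappa_mono (a, S) = (\<lambda>p. \<Sum>s\<in>S. wedge_sign S s * mono_form (a(s := a s + 1), S - {s}) p)"
    by (rule ext) (rule kappa_mono_apply)
  thus ?thesis using assms by (simp add: mono_ext_mono_form_sum)
qed

lemma mono_ext_d_mono:
  "mono_ext T (d_mono n (a, S)) x
     = (\<Sum>i\<in>{1..n} - S. real (a i) * wedge_sign S i * T (a(i := a i - 1), insert i S) x)"
proof -
  have "d_mono n (a, S) = (\<lambda>p. \<Sum>i\<in>{1..n} - S. real (a i) * wedge_sign S i * mono_form (a(i := a i - 1), insert i S) p)"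
    by (rule ext) (rule d_mono_apply)
  thus ?thesis by (simp add: mono_ext_mono_form_sum)
qed

lemma supp_kappa_mono: "supp (kappa_mono (a, S)) \<subseteq> (\<lambda>s. (a(s := a s + 1), S - {s})) ` S"
proof
  fix p assume p: "p \<in> supp (kappa_mono (a, S))"
  show "p \<in> (\<lambda>s. (a(s := a s + 1), S - {s})) ` S"
  proof (rule ccontr)
    assume "p \<notin> (\<lambda>s. (a(s := a s + 1), S - {s})) ` S"
    hence "kappa_mono (a, S) p = 0"
      unfolding kappa_mono_apply by (intro sum.neutral) (auto simp: mono_form_def)
    with p show False by (simp add: supp_def)
  qed
qed

lemma supp_d_mono:
  "supp (d_mono n (a, S)) \<subseteq> (\<lambda>i. (a(i := a i - 1), insert i S)) ` {i\<in>{1..n} - S. a i \<noteq> 0}"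
proof
  fix p assume p: "p \<in> supp (d_mono n (a, S))"
  show "p \<in> (\<lambda>i. (a(i := a i - 1), insert i S)) ` {i\<in>{1..n} - S. a i \<noteq> 0}"
  proof (rule ccontr)
    assume "p \<notin> (\<lambda>i. (a(i := a i - 1), insert i S)) ` {i\<in>{1..n} - S. a i \<noteq> 0}"
    hence "d_mono n (a, S) p = 0"
      unfolding d_mono_apply by (intro sum.neutral) (auto simp: mono_form_def)
    with p show False by (simp add: supp_def)
  qed
qed

lemma wedge_sign_sq: "wedge_sign S i * wedge_sign S i = 1"
  by (simp add: wedge_sign_def power_mult_distrib[symmetric])

lemma wedge_sign_remove_self: "wedge_sign (S - {s}) s = wedge_sign S s"
  unfolding wedge_sign_def by (rule arg_cong[where f="\<lambda>X. (-1) ^ card X"]) auto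

lemma wedge_sign_insert_self: "wedge_sign (insert i S) i = wedge_sign S i"
  unfolding wedge_sign_def by (rule arg_cong[where f="\<lambda>X. (-1) ^ card X"]) auto

lemma wedge_sign_remove_below:
  assumes "finite S" "s \<in> S" "s < t"
  shows "wedge_sign (S - {s}) t = - wedge_sign S t"
proof -
  have "card {j\<in>S. j < t} = Suc (card {j\<in>S - {s}. j < t})"
  proof -
    have "{j\<in>S. j < t} = insert s {j\<in>S - {s}. j < t}" using assms by auto
    thus ?thesis using assms(1) by simp
  qed
  thus ?thesis by (simp add: wedge_sign_def)
qed

lemma wedge_sign_remove_above: "t \<le> s \<Longrightarrow> wedge_sign (S - {s}) t = wedge_sign S t"
  unfolding wedge_sign_def by (rule arg_cong[where f="\<lambda>X. (-1) ^ card X"]) auto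

lemma wedge_sign_remove_swap:
  assumes "finite S" "s \<in> S" "t \<in> S" "s \<noteq> t"
  shows "wedge_sign S s * wedge_sign (S - {s}) t = - (wedge_sign S t * wedge_sign (S - {t}) s)"
proof -
  have swap: "wedge_sign S s * wedge_sign (S - {s}) t = - (wedge_sign S t * wedge_sign (S - {t}) s)"
    if "s \<in> S" "s < t" for s t
    using that assms(1) by (simp add: wedge_sign_remove_below wedge_sign_remove_above)
  show ?thesis
  proof (cases "s < t")
    case True thus ?thesis using swap assms by blast
  next
    case False
    hence "t < s" using assms(4) by simp
    thus ?thesis using swap[of t s] assms(3) by simp
  qed
qed

lemma wedge_sign_remove_insert:
  assumes "finite S" "s \<in> S" "i \<notin> S"
  shows "wedge_sign S s * wedge_sign (S - {s}) i = - (wedge_sign S i * wedge_sign (insert i S) s)"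
proof (cases "s < i")
  case True
  have "wedge_sign (insert i S) s = wedge_sign S s"
    unfolding wedge_sign_def using True by (intro arg_cong[where f="\<lambda>X. (-1) ^ card X"]) auto
  thus ?thesis using True assms by (simp add: wedge_sign_remove_below)
next
  case False
  hence lt: "i < s" using assms by (cases "i = s") auto
  have "{j\<in>insert i S. j < s} = insert i {j\<in>S. j < s}" using lt by auto
  hence "wedge_sign (insert i S) s = - wedge_sign S s"
    using assms by (simp add: wedge_sign_def)
  thus ?thesis using lt by (simp add: wedge_sign_remove_above)
qed

lemma sum_offdiag_antisym:
  fixes G :: "'a \<Rightarrow> 'a \<Rightarrow> real"
  assumes "finite S" "\<And>s t. s \<in> S \<Longrightarrow> t \<in> S \<Longrightarrow> s \<noteq> t \<Longrightarrow> G s t = - G t s"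
  shows "(\<Sum>s\<in>S. \<Sum>t\<in>S - {s}. G s t) = 0"
proof -
  define H where "H s t = (if s = t then 0 else G s t)" for s t
  have "(\<Sum>s\<in>S. \<Sum>t\<in>S - {s}. G s t) = (\<Sum>s\<in>S. \<Sum>t\<in>S. H s t)"
  proof (rule sum.cong[OF refl])
    fix s assume "s \<in> S"
    hence "(\<Sum>t\<in>S. H s t) = (\<Sum>t\<in>S - {s}. H s t)"
      using assms(1) by (simp add: sum.remove H_def)
    also have "\<dots> = (\<Sum>t\<in>S - {s}. G s t)" by (rule sum.cong) (auto simp: H_def)
    finally show "(\<Sum>t\<in>S - {s}. G s t) = (\<Sum>t\<in>S. H s t)" ..
  qed
  moreover have "(\<Sum>s\<in>S. \<Sum>t\<in>S. H s t) = - (\<Sum>s\<in>S. \<Sum>t\<in>S. H s t)"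
  proof -
    have anti: "H s t = - H t s" if "s \<in> S" "t \<in> S" for s t
      using assms(2)[OF that] by (cases "s = t") (simp_all add: H_def)
    have "(\<Sum>s\<in>S. \<Sum>t\<in>S. H s t) = (\<Sum>t\<in>S. \<Sum>s\<in>S. H s t)"
      by (rule sum.swap)
    also have "\<dots> = (\<Sum>t\<in>S. \<Sum>s\<in>S. - H t s)"
      by (rule sum.cong[OF refl], rule sum.cong[OF refl], rule anti)
    finally have "(\<Sum>s\<in>S. \<Sum>t\<in>S. H s t) = (\<Sum>t\<in>S. \<Sum>s\<in>S. - H t s)" .
    thus ?thesis by (simp add: sum_negf)
  qed
  ultimately show ?thesis by simp
qed


lemma kappa_kappa_mono: "kappa (kappa_mono (a, S)) = zero_form"
proof (cases "finite S")
  case False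
  hence "kappa_mono (a, S) = (\<lambda>p. 0)" by (simp add: kappa_mono_def)
  thus ?thesis by (simp add: kappa_def supp_def zero_form_def)
next
  case fin: True
  have "kappa (kappa_mono (a, S)) x = 0" for x
  proof -
    let ?G = "\<lambda>s t. wedge_sign S s * wedge_sign (S - {s}) t
                    * mono_form (a(s := a s + 1, t := a t + 1), S - {s} - {t}) x"
    have "kappa (kappa_mono (a, S)) x = (\<Sum>s\<in>S. wedge_sign S s * kappa_mono (a(s := a s + 1), S - {s}) x)"
      unfolding kappa_eq_mono_ext using fin by (rule mono_ext_kappa_mono)
    also have "\<dots> = (\<Sum>s\<in>S. \<Sum>t\<in>S - {s}. ?G s t)"
      unfolding kappa_mono_apply sum_distrib_left
      by (rule sum.cong[OF refl], rule sum.cong[OF refl]) (simp add: mult.assoc)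
    also have "\<dots> = 0"
    proof (rule sum_offdiag_antisym[OF fin])
      fix s t assume st: "s \<in> S" "t \<in> S" "s \<noteq> t"
      have "(a(s := a s + 1, t := a t + 1), S - {s} - {t})
          = (a(t := a t + 1, s := a s + 1), S - {t} - {s})"
        using st by (auto simp: fun_upd_twist)
      thus "?G s t = - ?G t s"
        by (subst wedge_sign_remove_swap[OF fin st]) simp
    qed
    finally show ?thesis .
  qed
  thus ?thesis by (auto simp: zero_form_def)
qed

lemma kappa_kappa:
  assumes "f \<in> fin_forms"
  shows "kappa (kappa f) = zero_form"
proof -
  have "kappa (kappa f) = mono_ext (\<lambda>q. kappa (kappa_mono q)) f"
    unfolding kappa_eq_mono_ext by (rule mono_ext_mono_ext[OF assms kappa_mono_fin])
  also have "(\<lambda>q. kappa (kappa_mono q)) = (\<lambda>q. zero_form)"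
    by (rule ext) (metis kappa_kappa_mono surj_pair)
  finally show ?thesis by (simp add: mono_ext_def zero_form_def)
qed

lemma d_mono_kappa_term:
  assumes "S \<subseteq> {1..n}" "s \<in> S"
  shows "d_mono n (a(s := a s + 1), S - {s}) x
     = (real (a s) + 1) * wedge_sign S s * mono_form (a, S) x
     + (\<Sum>i\<in>{1..n} - S. wedge_sign (S - {s}) i * real (a i)
          * mono_form (a(s := a s + 1, i := a i - 1), insert i (S - {s})) x)"
proof -
  let ?b = "a(s := a s + 1)"
  let ?D = "{1..n} - S"
  have "{1..n} - (S - {s}) = insert s ?D" using assms by auto
  moreover have "s \<notin> ?D" using assms by simp
  moreover have "?b(s := ?b s - 1) = a" "insert s (S - {s}) = S"
    using assms by auto
  moreover have "(\<Sum>i\<in>?D. real (?b i) * wedge_sign (S - {s}) i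
        * mono_form (?b(i := ?b i - 1), insert i (S - {s})) x)
      = (\<Sum>i\<in>?D. wedge_sign (S - {s}) i * real (a i)
        * mono_form (a(s := a s + 1, i := a i - 1), insert i (S - {s})) x)"
    using assms by (intro sum.cong) auto
  ultimately show ?thesis
    unfolding d_mono_apply by (simp add: wedge_sign_remove_self)
qed

lemma kappa_mono_d_term:
  assumes "finite S" "i \<in> {1..n} - S"
  shows "real (a i) * kappa_mono (a(i := a i - 1), insert i S) x
     = real (a i) * wedge_sign S i * mono_form (a, S) x
     + (\<Sum>t\<in>S. wedge_sign (insert i S) t * real (a i)
          * mono_form (a(i := a i - 1, t := a t + 1), insert i S - {t}) x)"
proof -
  let ?b = "a(i := a i - 1)"
  have iS: "i \<notin> S" using assms by simp
  have k: "kappa_mono (?b, insert i S) x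
      = wedge_sign (insert i S) i * mono_form (?b(i := ?b i + 1), insert i S - {i}) x
      + (\<Sum>t\<in>S. wedge_sign (insert i S) t * mono_form (?b(t := ?b t + 1), insert i S - {t}) x)"
    unfolding kappa_mono_apply by (rule sum.insert[OF assms(1) iS])
  have rest: "(\<Sum>t\<in>S. wedge_sign (insert i S) t * mono_form (?b(t := ?b t + 1), insert i S - {t}) x)
      = (\<Sum>t\<in>S. wedge_sign (insert i S) t
          * mono_form (a(i := a i - 1, t := a t + 1), insert i S - {t}) x)"
    using iS by (intro sum.cong) auto
  have head: "real (a i) * (wedge_sign (insert i S) i * mono_form (?b(i := ?b i + 1), insert i S - {i}) x)
      = real (a i) * wedge_sign S i * mono_form (a, S) x"
    using iS by (cases "a i = 0") (auto simp: wedge_sign_insert_self insert_Diff_if)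
  show ?thesis unfolding k rest distrib_left sum_distrib_left head by (simp add: mult_ac)
qed

lemma dform_kappa_mono:
  assumes "valid_mono n (a, S)"
  shows "dform n (kappa_mono (a, S)) x
     = ((\<Sum>s\<in>S. real (a s)) + real (card S)) * mono_form (a, S) x
     + (\<Sum>s\<in>S. \<Sum>i\<in>{1..n} - S. wedge_sign S s * wedge_sign (S - {s}) i * real (a i)
          * mono_form (a(s := a s + 1, i := a i - 1), insert i (S - {s})) x)"
proof -
  have Sn: "S \<subseteq> {1..n}" using assms by (simp add: valid_mono_def)
  hence fin: "finite S" by (rule finite_subset) simp
  let ?D = "{1..n} - S"
  have "dform n (kappa_mono (a, S)) x
      = (\<Sum>s\<in>S. wedge_sign S s * d_mono n (a(s := a s + 1), S - {s}) x)"
    unfolding dform_eq_mono_ext using fin by (rule mono_ext_kappa_mono)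
  also have "\<dots> = (\<Sum>s\<in>S. (real (a s) + 1) * mono_form (a, S) x
      + (\<Sum>i\<in>?D. wedge_sign S s * wedge_sign (S - {s}) i * real (a i)
          * mono_form (a(s := a s + 1, i := a i - 1), insert i (S - {s})) x))"
  proof (rule sum.cong[OF refl])
    fix s assume "s \<in> S"
    have "wedge_sign S s * ((real (a s) + 1) * wedge_sign S s * mono_form (a, S) x)
        = (real (a s) + 1) * mono_form (a, S) x * (wedge_sign S s * wedge_sign S s)"
      by (simp add: algebra_simps)
    hence "wedge_sign S s * ((real (a s) + 1) * wedge_sign S s * mono_form (a, S) x)
        = (real (a s) + 1) * mono_form (a, S) x"
      by (simp add: wedge_sign_sq)
    thus "wedge_sign S s * d_mono n (a(s := a s + 1), S - {s}) x = (real (a s) + 1) * mono_form (a, S) x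
      + (\<Sum>i\<in>?D. wedge_sign S s * wedge_sign (S - {s}) i * real (a i)
          * mono_form (a(s := a s + 1, i := a i - 1), insert i (S - {s})) x)"
      unfolding d_mono_kappa_term[OF Sn \<open>s \<in> S\<close>] distrib_left sum_distrib_left by (simp add: mult.assoc)
  qed
  moreover have "(\<Sum>s\<in>S. (real (a s) + 1) * mono_form (a, S) x)
      = ((\<Sum>s\<in>S. real (a s)) + real (card S)) * mono_form (a, S) x"
    by (simp add: sum_distrib_right[symmetric] sum.distrib)
  ultimately show ?thesis by (simp add: sum.distrib)
qed

lemma kappa_d_mono:
  assumes "finite S"
  shows "kappa (d_mono n (a, S)) x
     = (\<Sum>i\<in>{1..n} - S. real (a i)) * mono_form (a, S) x
     + (\<Sum>i\<in>{1..n} - S. \<Sum>t\<in>S. wedge_sign S i * wedge_sign (insert i S) t * real (a i)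
          * mono_form (a(i := a i - 1, t := a t + 1), insert i S - {t}) x)"
proof -
  let ?D = "{1..n} - S"
  have "kappa (d_mono n (a, S)) x
      = (\<Sum>i\<in>?D. real (a i) * wedge_sign S i * kappa_mono (a(i := a i - 1), insert i S) x)"
    unfolding kappa_eq_mono_ext by (rule mono_ext_d_mono)
  also have "\<dots> = (\<Sum>i\<in>?D. real (a i) * mono_form (a, S) x
      + (\<Sum>t\<in>S. wedge_sign S i * wedge_sign (insert i S) t * real (a i)
          * mono_form (a(i := a i - 1, t := a t + 1), insert i S - {t}) x))"
  proof (rule sum.cong[OF refl])
    fix i assume i: "i \<in> ?D"
    have "real (a i) * wedge_sign S i * kappa_mono (a(i := a i - 1), insert i S) x
        = wedge_sign S i * (real (a i) * kappa_mono (a(i := a i - 1), insert i S) x)"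
      by simp
    also have "\<dots> = real (a i) * mono_form (a, S) x * (wedge_sign S i * wedge_sign S i)
      + (\<Sum>t\<in>S. wedge_sign S i * wedge_sign (insert i S) t * real (a i)
          * mono_form (a(i := a i - 1, t := a t + 1), insert i S - {t}) x)"
      unfolding kappa_mono_d_term[OF assms i] distrib_left sum_distrib_left by (simp add: algebra_simps)
    finally show "real (a i) * wedge_sign S i * kappa_mono (a(i := a i - 1), insert i S) x
      = real (a i) * mono_form (a, S) x
      + (\<Sum>t\<in>S. wedge_sign S i * wedge_sign (insert i S) t * real (a i)
          * mono_form (a(i := a i - 1, t := a t + 1), insert i S - {t}) x)"
      by (simp add: wedge_sign_sq)
  qed
  finally show ?thesis by (simp add: sum.distrib sum_distrib_right)
qed

lemma homotopy_mono:
  assumes "valid_mono n (a, S)"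
  shows "dform n (kappa_mono (a, S)) x + kappa (d_mono n (a, S)) x
     = (real (mdeg n a) + real (card S)) * mono_form (a, S) x"
proof -
  have Sn: "S \<subseteq> {1..n}" using assms by (simp add: valid_mono_def)
  hence fin: "finite S" by (rule finite_subset) simp
  let ?D = "{1..n} - S"
  txt \<open>The cross terms cancel in pairs \<open>(s, i)\<close>: both reach the same monomial, with opposite signs.\<close>
  have cross: "(\<Sum>s\<in>S. \<Sum>i\<in>?D. wedge_sign S s * wedge_sign (S - {s}) i * real (a i)
          * mono_form (a(s := a s + 1, i := a i - 1), insert i (S - {s})) x)
      + (\<Sum>i\<in>?D. \<Sum>t\<in>S. wedge_sign S i * wedge_sign (insert i S) t * real (a i)
          * mono_form (a(i := a i - 1, t := a t + 1), insert i S - {t}) x) = 0"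
  proof -
    have "wedge_sign S s * wedge_sign (S - {s}) i * real (a i)
          * mono_form (a(s := a s + 1, i := a i - 1), insert i (S - {s})) x
        + wedge_sign S i * wedge_sign (insert i S) s * real (a i)
          * mono_form (a(i := a i - 1, s := a s + 1), insert i S - {s}) x = 0"
      if s: "s \<in> S" and i: "i \<in> ?D" for s i
    proof -
      have "(a(s := a s + 1, i := a i - 1), insert i (S - {s}))
          = (a(i := a i - 1, s := a s + 1), insert i S - {s})"
        using s i by (auto simp: fun_upd_twist)
      thus ?thesis
        by (subst wedge_sign_remove_insert[OF fin s]) (use i in simp_all)
    qed
    thus ?thesis
      by (subst sum.swap[of _ ?D]) (simp add: sum.distrib[symmetric])
  qed
  have deg: "real (mdeg n a) = (\<Sum>s\<in>S. real (a s)) + (\<Sum>i\<in>?D. real (a i))"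
  proof -
    have "mdeg n a = (\<Sum>i\<in>?D. a i) + (\<Sum>i\<in>S. a i)"
      unfolding mdeg_def by (rule sum.subset_diff[OF Sn]) simp
    thus ?thesis by simp
  qed
  show ?thesis
    unfolding dform_kappa_mono[OF assms] kappa_d_mono[OF fin] deg
    using cross by (simp add: algebra_simps)
qed

definition homog_monos :: "nat \<Rightarrow> nat \<Rightarrow> nat \<Rightarrow> mono set" where
  "homog_monos n p k = {m. valid_mono n m \<and> mdeg n (fst m) = p \<and> card (snd m) = k}"

lemma homotopy_formula:
  assumes f: "f \<in> fin_forms" and "supp f \<subseteq> homog_monos n p k"
  shows "dform n (kappa f) x + kappa (dform n f) x = (real p + real k) * f x"
proof -
  have "dform n (kappa f) x + kappa (dform n f) x
      = (\<Sum>q\<in>supp f. f q * (dform n (kappa_mono q) x + kappa (d_mono n q) x))"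
    unfolding kappa_eq_mono_ext dform_eq_mono_ext
    by (simp add: mono_ext_mono_ext[OF f] kappa_mono_fin d_mono_fin)
       (simp add: mono_ext_def sum.distrib distrib_left)
  also have "\<dots> = (\<Sum>q\<in>supp f. (real p + real k) * (f q * mono_form q x))"
  proof (rule sum.cong[OF refl])
    fix q assume q: "q \<in> supp f"
    obtain a S where qa: "q = (a, S)" by (cases q)
    hence "valid_mono n (a, S)" "mdeg n a = p" "card S = k"
      using assms q by (auto simp: homog_monos_def)
    thus "f q * (dform n (kappa_mono q) x + kappa (d_mono n q) x) = (real p + real k) * (f q * mono_form q x)"
      using homotopy_mono[of n a S x] qa by simp
  qed
  also have "\<dots> = (real p + real k) * f x"
    using fun_cong[OF fin_form_expansion[OF f], of x] by (simp add: sum_distrib_left[symmetric])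
  finally show ?thesis .
qed


section \<open>The polynomial, Koszul and serendipity spaces\<close>

lemma Hrl_eq: "Hrl n p l k = {f\<in>fin_forms. supp f \<subseteq> {m \<in> homog_monos n p k. l \<le> ldeg n m}}"
proof -
  have "{m \<in> homog_monos n p k. l \<le> ldeg n m}
      = {m. valid_mono n m \<and> mdeg n (fst m) = p \<and> card (snd m) = k \<and> l \<le> ldeg n m}"
    by (auto simp: homog_monos_def)
  thus ?thesis unfolding Hrl_def by (simp only: lspan_mono_forms)
qed

lemma Hsp_eq: "Hsp n p k = {f\<in>fin_forms. supp f \<subseteq> homog_monos n p k}"
  unfolding Hsp_def Hrl_eq by simp

lemma Hrl_subset_Hsp: "Hrl n p l k \<subseteq> Hsp n p k"
  unfolding Hsp_eq Hrl_eq by auto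

lemma Hrl_antimono: "l' \<le> l \<Longrightarrow> Hrl n p l k \<subseteq> Hrl n p l' k"
  unfolding Hrl_eq by auto

lemma mdeg_fun_upd: "s \<in> {1..n} \<Longrightarrow> mdeg n (a(s := v)) + a s = mdeg n a + v"
proof -
  assume s: "s \<in> {1..n}"
  have "mdeg n (a(s := v)) = v + (\<Sum>i\<in>{1..n} - {s}. (a(s := v)) i)"
    unfolding mdeg_def using s by (simp add: sum.remove)
  moreover have "mdeg n a = a s + (\<Sum>i\<in>{1..n} - {s}. a i)"
    unfolding mdeg_def using s by (simp add: sum.remove)
  moreover have "(\<Sum>i\<in>{1..n} - {s}. (a(s := v)) i) = (\<Sum>i\<in>{1..n} - {s}. a i)"
    by (rule sum.cong) auto
  ultimately show ?thesis by simp
qed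

lemma supp_kappa_mono_homog:
  assumes "q \<in> homog_monos n j (Suc k)"
  shows "supp (kappa_mono q) \<subseteq> homog_monos n (Suc j) k"
proof
  obtain a S where qa: "q = (a, S)" by (cases q)
  have v: "\<forall>i. i \<notin> {1..n} \<longrightarrow> a i = 0" "S \<subseteq> {1..n}" "mdeg n a = j" "card S = Suc k"
    using assms qa by (auto simp: homog_monos_def valid_mono_def)
  have fin: "finite S" using v(2) by (rule finite_subset) simp
  fix y assume "y \<in> supp (kappa_mono q)"
  then obtain s where s: "s \<in> S" "y = (a(s := a s + 1), S - {s})"
    using supp_kappa_mono[of a S] qa by auto
  have "mdeg n (a(s := a s + 1)) = Suc j" using mdeg_fun_upd[of s n a "a s + 1"] s v by auto
  moreover have "card (S - {s}) = k" using s v fin by simp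
  moreover have "valid_mono n (a(s := a s + 1), S - {s})"
    using v s unfolding valid_mono_def by auto
  ultimately show "y \<in> homog_monos n (Suc j) k" using s by (simp add: homog_monos_def)
qed

lemma supp_d_mono_homog:
  assumes "q \<in> homog_monos n j k"
  shows "supp (d_mono n q) \<subseteq> homog_monos n (j - 1) (Suc k)"
proof
  obtain a S where qa: "q = (a, S)" by (cases q)
  have v: "\<forall>i. i \<notin> {1..n} \<longrightarrow> a i = 0" "S \<subseteq> {1..n}" "mdeg n a = j" "card S = k"
    using assms qa by (auto simp: homog_monos_def valid_mono_def)
  have fin: "finite S" using v(2) by (rule finite_subset) simp
  fix y assume "y \<in> supp (d_mono n q)"
  then obtain i where i: "i \<in> {1..n}" "i \<notin> S" "a i \<noteq> 0" "y = (a(i := a i - 1), insert i S)"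
    using supp_d_mono[of n a S] qa by auto
  have "mdeg n (a(i := a i - 1)) = j - 1" using mdeg_fun_upd[of i n a "a i - 1"] i v by auto
  moreover have "card (insert i S) = Suc k" using i v fin by simp
  moreover have "valid_mono n (a(i := a i - 1), insert i S)"
    using v i unfolding valid_mono_def by auto
  ultimately show "y \<in> homog_monos n (j - 1) (Suc k)" using i by (simp add: homog_monos_def)
qed

lemma kappa_Hsp:
  assumes "f \<in> Hsp n j (Suc k)"
  shows "kappa f \<in> Hsp n (Suc j) k"
proof -
  have f: "f \<in> fin_forms" and s: "supp f \<subseteq> homog_monos n j (Suc k)"
    using assms by (auto simp: Hsp_eq)
  from s have "supp (mono_ext kappa_mono f) \<subseteq> homog_monos n (Suc j) k"
    by (rule mono_ext_supp_subset[OF _ supp_kappa_mono_homog])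
  moreover have "mono_ext kappa_mono f \<in> fin_forms" by (rule mono_ext_fin[OF kappa_mono_fin f])
  ultimately show ?thesis by (simp add: Hsp_eq kappa_eq_mono_ext)
qed

lemma dform_Hsp:
  assumes "f \<in> Hsp n j k"
  shows "dform n f \<in> Hsp n (j - 1) (Suc k)"
proof -
  have f: "f \<in> fin_forms" and s: "supp f \<subseteq> homog_monos n j k"
    using assms by (auto simp: Hsp_eq)
  from s have "supp (mono_ext (d_mono n) f) \<subseteq> homog_monos n (j - 1) (Suc k)"
    by (rule mono_ext_supp_subset[OF _ supp_d_mono_homog])
  moreover have "mono_ext (d_mono n) f \<in> fin_forms" by (rule mono_ext_fin[OF d_mono_fin f])
  ultimately show ?thesis by (simp add: Hsp_eq dform_eq_mono_ext)
qed

lemma Hrl_fin: "Hrl n p l k \<subseteq> fin_forms"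
  by (auto simp: Hrl_eq)

lemma Hsp_fin: "Hsp n p k \<subseteq> fin_forms"
  by (auto simp: Hsp_eq)

lemma Psp_fin: "Psp n r k \<subseteq> fin_forms"
  unfolding Psp_def using Hsp_fin by (intro lspan_least form_subspace_fin_forms) blast

lemma Jsp_fin: "Jsp n r k \<subseteq> fin_forms"
  unfolding Jsp_def using Hrl_fin kappa_fin by (intro lspan_least form_subspace_fin_forms) blast

lemma Hsp_subset_Psp: "j \<le> r \<Longrightarrow> Hsp n j k \<subseteq> Psp n r k"
  unfolding Psp_def by (rule order.trans[OF _ lspan_superset]) auto

lemma Psp_mono: "r \<le> r' \<Longrightarrow> Psp n r k \<subseteq> Psp n r' k"
  unfolding Psp_def by (intro lspan_mono UN_mono) auto

lemma kappa_Psp: "kappa ` Psp n r (Suc k) \<subseteq> Psp n (Suc r) k"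
  unfolding Psp_def[of n r]
proof (rule fin_linear_image_lspan[OF fin_linear_kappa])
  show "(\<Union>j\<in>{0..r}. Hsp n j (Suc k)) \<subseteq> fin_forms"
    using Hsp_fin by blast
  show "form_subspace (Psp n (Suc r) k)" unfolding Psp_def by (rule form_subspace_lspan)
  show "kappa ` (\<Union>j\<in>{0..r}. Hsp n j (Suc k)) \<subseteq> Psp n (Suc r) k"
  proof clarify
    fix j f assume "j \<in> {0..r}" "f \<in> Hsp n j (Suc k)"
    thus "kappa f \<in> Psp n (Suc r) k" using kappa_Hsp[of f n j k] Hsp_subset_Psp[of "Suc j" "Suc r" n k] by auto
  qed
qed

lemma dform_Psp: "dform n ` Psp n r k \<subseteq> Psp n (r - 1) (Suc k)"
  unfolding Psp_def[of n r]
proof (rule fin_linear_image_lspan[OF fin_linear_dform])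
  show "(\<Union>j\<in>{0..r}. Hsp n j k) \<subseteq> fin_forms"
    using Hsp_fin by blast
  show "form_subspace (Psp n (r - 1) (Suc k))" unfolding Psp_def by (rule form_subspace_lspan)
  show "dform n ` (\<Union>j\<in>{0..r}. Hsp n j k) \<subseteq> Psp n (r - 1) (Suc k)"
  proof clarify
    fix j f assume "j \<in> {0..r}" "f \<in> Hsp n j k"
    thus "dform n f \<in> Psp n (r - 1) (Suc k)" using dform_Hsp[of f n j k] Hsp_subset_Psp[of "j - 1" "r - 1" n "Suc k"] diff_le_mono by auto
  qed
qed

lemma kappa_Hrl_in_Jsp: "1 \<le> l \<Longrightarrow> \<eta> \<in> Hrl n (r + l - 1) l (k + 1) \<Longrightarrow> kappa \<eta> \<in> Jsp n r k"
  unfolding Jsp_def by (rule subsetD[OF lspan_superset]) auto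

lemma Jsp_subset_Suc: "Jsp n r k \<subseteq> lspan (Psp n (Suc r) k \<union> Jsp n (Suc r) k)"
  unfolding Jsp_def[of n r]
proof (rule lspan_least[OF form_subspace_lspan], rule subsetI)
  fix y assume "y \<in> (\<Union>l\<in>{1..}. kappa ` Hrl n (r + l - 1) l (k + 1))"
  then obtain l f where lf: "1 \<le> l" "f \<in> Hrl n (r + l - 1) l (k + 1)" "y = kappa f" by auto
  have "y \<in> Psp n (Suc r) k \<union> Jsp n (Suc r) k"
  proof (cases "l = 1")
    case True
    hence "f \<in> Hsp n r (Suc k)" using lf Hrl_subset_Hsp[of n r l "Suc k"] by auto
    thus ?thesis using lf(3) kappa_Hsp Hsp_subset_Psp by blast
  next
    case False
    hence "f \<in> Hrl n (Suc r + (l - 1) - 1) (l - 1) (k + 1)"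
      using lf Hrl_antimono[of "l - 1" l] by auto
    moreover have "1 \<le> l - 1" using lf False by simp
    ultimately show ?thesis using lf(3) kappa_Hrl_in_Jsp by blast
  qed
  thus "y \<in> lspan (Psp n (Suc r) k \<union> Jsp n (Suc r) k)" using lspan_superset by blast
qed

lemma kappa_Jsp: "f \<in> Jsp n r k \<Longrightarrow> kappa f = zero_form"
proof -
  have "form_subspace {zero_form}" by (simp add: form_subspace_def zero_form_def)
  hence "kappa ` Jsp n r k \<subseteq> {zero_form}"
    unfolding Jsp_def using Hrl_fin kappa_fin kappa_kappa
    by (intro fin_linear_image_lspan[OF fin_linear_kappa]) blast+
  thus "f \<in> Jsp n r k \<Longrightarrow> kappa f = zero_form" by blast
qed

lemma kappa_dform_kappa:
  assumes "\<eta> \<in> Hsp n p (Suc k)"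
  shows "kappa (dform n (kappa \<eta>)) = (\<lambda>x. (real (Suc p) + real k) * kappa \<eta> x)"
proof
  fix x
  have \<eta>: "\<eta> \<in> fin_forms" using assms by (simp add: Hsp_eq)
  have "kappa \<eta> \<in> fin_forms" "supp (kappa \<eta>) \<subseteq> homog_monos n (Suc p) k"
    using kappa_Hsp[OF assms] by (auto simp: Hsp_eq)
  hence "dform n (kappa (kappa \<eta>)) x + kappa (dform n (kappa \<eta>)) x = (real (Suc p) + real k) * kappa \<eta> x"
    by (rule homotopy_formula)
  thus "kappa (dform n (kappa \<eta>)) x = (real (Suc p) + real k) * kappa \<eta> x"
    by (simp add: kappa_kappa[OF \<eta>] dform_def supp_def zero_form_def)
qed

lemma kappa_dform_Jsp: "f \<in> Jsp n r k \<Longrightarrow> kappa (dform n f) \<in> Jsp n r k"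
proof -
  have "(\<lambda>f. kappa (dform n f)) ` Jsp n r k \<subseteq> Jsp n r k"
    unfolding Jsp_def[of n r k]
  proof (rule fin_linear_image_lspan)
    show "fin_linear (\<lambda>f. kappa (dform n f))"
      by (rule fin_linear_comp[OF fin_linear_kappa fin_linear_dform])
    show "(\<Union>l\<in>{1..}. kappa ` Hrl n (r + l - 1) l (k + 1)) \<subseteq> fin_forms"
      using Hrl_fin kappa_fin by blast
    show "form_subspace (lspan (\<Union>l\<in>{1..}. kappa ` Hrl n (r + l - 1) l (k + 1)))"
      by (rule form_subspace_lspan)
    show "(\<lambda>f. kappa (dform n f)) ` (\<Union>l\<in>{1..}. kappa ` Hrl n (r + l - 1) l (k + 1))
        \<subseteq> lspan (\<Union>l\<in>{1..}. kappa ` Hrl n (r + l - 1) l (k + 1))"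
    proof (rule image_subsetI)
      fix g assume "g \<in> (\<Union>l\<in>{1..}. kappa ` Hrl n (r + l - 1) l (k + 1))"
      then obtain l \<eta> where l: "l \<in> {1..}" "\<eta> \<in> Hrl n (r + l - 1) l (k + 1)" and g: "g = kappa \<eta>"
        by blast
      hence "kappa \<eta> \<in> lspan (\<Union>l\<in>{1..}. kappa ` Hrl n (r + l - 1) l (k + 1))"
        using kappa_Hrl_in_Jsp by (simp add: Jsp_def)
      moreover have "\<eta> \<in> Hsp n (r + l - 1) (Suc k)" using l Hrl_subset_Hsp by fastforce
      ultimately show "kappa (dform n g) \<in> lspan (\<Union>l\<in>{1..}. kappa ` Hrl n (r + l - 1) l (k + 1))"
        using form_subspace_lspan kappa_dform_kappa g by (simp add: form_subspace_def)
    qed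
  qed
  thus "f \<in> Jsp n r k \<Longrightarrow> kappa (dform n f) \<in> Jsp n r k" by blast
qed


lemma form_subspace_Ssp: "form_subspace (Ssp n r k)"
  unfolding Ssp_def by (rule form_subspace_lspan)

lemma zero_form_in_Ssp: "zero_form \<in> Ssp n r k"
  using form_subspace_Ssp by (simp add: form_subspace_def)

lemma Psp_subset_Ssp: "Psp n r k \<subseteq> Ssp n r k"
  unfolding Ssp_def by (rule order.trans[OF _ lspan_superset]) blast

lemma Jsp_subset_Ssp: "Jsp n r k \<subseteq> Ssp n r k"
  unfolding Ssp_def by (rule order.trans[OF _ lspan_superset]) blast

lemma dform_Jsp_subset_Ssp: "dform n ` Jsp n (Suc r) k \<subseteq> Ssp n r (Suc k)"
  unfolding Ssp_def by (rule order.trans[OF _ lspan_superset]) simp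

lemma Ssp_subset_Ssp_Suc: "Ssp n r k \<subseteq> Ssp n (Suc r) k"
proof -
  let ?V = "Ssp n (Suc r) k"
  have P: "Psp n r k \<subseteq> ?V"
    using Psp_mono[of r "Suc r" n k] Psp_subset_Ssp[of n "Suc r" k] by simp
  have "lspan (Psp n (Suc r) k \<union> Jsp n (Suc r) k) \<subseteq> ?V"
    by (intro lspan_least[OF form_subspace_Ssp] Un_least Psp_subset_Ssp Jsp_subset_Ssp)
  hence J: "Jsp n r k \<subseteq> ?V"
    using Jsp_subset_Suc[of n r k] by (rule order.trans[rotated])
  have dJ: "dform n ` Jsp n (Suc r) k' \<subseteq> ?V" if k: "k = Suc k'" for k'
  proof -
    have "dform n ` lspan (Psp n (Suc (Suc r)) k' \<union> Jsp n (Suc (Suc r)) k') \<subseteq> ?V"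
    proof (rule fin_linear_image_lspan[OF fin_linear_dform _ form_subspace_Ssp])
      show "Psp n (Suc (Suc r)) k' \<union> Jsp n (Suc (Suc r)) k' \<subseteq> fin_forms"
        using Psp_fin Jsp_fin by (rule Un_least)
      have "dform n ` Psp n (Suc (Suc r)) k' \<subseteq> ?V"
        using dform_Psp[of n "Suc (Suc r)" k'] Psp_subset_Ssp[of n "Suc r" "Suc k'"] k by simp
      moreover have "dform n ` Jsp n (Suc (Suc r)) k' \<subseteq> ?V"
        using dform_Jsp_subset_Ssp[of n "Suc r" k'] k by simp
      ultimately show "dform n ` (Psp n (Suc (Suc r)) k' \<union> Jsp n (Suc (Suc r)) k') \<subseteq> ?V"
        by (simp only: image_Un Un_least)
    qed
    moreover have "dform n ` Jsp n (Suc r) k'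
        \<subseteq> dform n ` lspan (Psp n (Suc (Suc r)) k' \<union> Jsp n (Suc (Suc r)) k')"
      using Jsp_subset_Suc[of n "Suc r" k'] by (rule image_mono)
    ultimately show ?thesis by (rule order.trans[rotated])
  qed
  have "(if k = 0 then {zero_form} else dform n ` Jsp n (r + 1) (k - 1)) \<subseteq> ?V"
    using zero_form_in_Ssp dJ by (cases k) simp_all
  with P J show ?thesis
    unfolding Ssp_def[of n r k] by (intro lspan_least[OF form_subspace_Ssp] Un_least)
qed

lemma kappa_Ssp: "kappa ` Ssp n r (Suc k) \<subseteq> Ssp n (Suc r) k"
  unfolding Ssp_def[of n r "Suc k"]
proof (rule fin_linear_image_lspan[OF fin_linear_kappa _ form_subspace_Ssp])
  show "Psp n r (Suc k) \<union> Jsp n r (Suc k)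
      \<union> (if Suc k = 0 then {zero_form} else dform n ` Jsp n (r + 1) (Suc k - 1)) \<subseteq> fin_forms"
    using Psp_fin Jsp_fin dform_fin[OF subsetD[OF Jsp_fin]] by auto
  have "kappa ` Psp n r (Suc k) \<subseteq> Ssp n (Suc r) k"
    using kappa_Psp Psp_subset_Ssp by blast
  moreover have "kappa ` Jsp n r (Suc k) \<subseteq> Ssp n (Suc r) k"
    using kappa_Jsp zero_form_in_Ssp by auto
  moreover have "kappa ` dform n ` Jsp n (Suc r) k \<subseteq> Ssp n (Suc r) k"
    using kappa_dform_Jsp Jsp_subset_Ssp by blast
  ultimately show "kappa ` (Psp n r (Suc k) \<union> Jsp n r (Suc k)
      \<union> (if Suc k = 0 then {zero_form} else dform n ` Jsp n (r + 1) (Suc k - 1))) \<subseteq> Ssp n (Suc r) k"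
    by (simp add: image_Un)
qed

lemma Ssp_subset_Sminus: "Ssp n r k \<subseteq> Sminus n (Suc r) k"
  unfolding Sminus_def by (rule order.trans[OF _ lspan_superset]) simp

lemma Sminus_subset_Ssp: "Sminus n (Suc r) k \<subseteq> Ssp n (Suc r) k"
  unfolding Sminus_def
  using Ssp_subset_Ssp_Suc kappa_Ssp by (intro lspan_least form_subspace_Ssp) auto

theorem mainTheorem1:
  fixes n r k :: nat
  assumes "n \<ge> 1" and "r \<ge> 1" and "k \<le> n"
  shows "Ssp n r k \<subseteq> Sminus n (r + 1) k \<and> Sminus n (r + 1) k \<subseteq> Ssp n (r + 1) k"
  using Ssp_subset_Sminus Sminus_subset_Ssp by simp

end
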